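(* Let $H$ be a graph such that $L(H)$ has a $K_t$-minor. Then for every integer $m\geq 2$, $L(mH)$ has a $K_{mt}$-minor.
   Context: Graphs are finite and may have parallel edges but no loops. $L(H)$ is the simple graph with vertex set $E(H)$ in which two distinct edges of $H$ are adjacent iff they share at least one endpoint. For $m\geq 2$, $mH$ denotes the graph obtained from $H$ by replacing each edge $e$ by $m$ parallel copies of $e$. A graph has a $K_t$-minor if $K_t$ can be obtained from a subgraph of it by contracting edges. *)

theory Defs
  imports Main
begin

text \<open>A finite multigraph without loops: vertex set V, edge set E (edges are abstract
  objects, so parallel edges are allowed), and an endpoint map assigning to each edge
  a set of exactly two distinct vertices.\<close>
definition multigraph :: "'v set \<Rightarrow> 'e set \<Rightarrow> ('e \<Rightarrow> 'v set) \<Rightarrow> bool" where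
  "multigraph V E ends \<longleftrightarrow> finite V \<and> finite E \<and>
     (\<forall>e\<in>E. ends e \<subseteq> V \<and> card (ends e) = 2)"

text \<open>mH: each edge e is replaced by m parallel copies (e,0),...,(e,m-1).\<close>
definition mult_edges :: "nat \<Rightarrow> 'e set \<Rightarrow> ('e \<times> nat) set" where
  "mult_edges m E = E \<times> {0..<m}"

definition mult_ends :: "('e \<Rightarrow> 'v set) \<Rightarrow> ('e \<times> nat) \<Rightarrow> 'v set" where
  "mult_ends ends = (\<lambda>(e, i). ends e)"

definition line_adj :: "'e set \<Rightarrow> ('e \<Rightarrow> 'v set) \<Rightarrow> 'e \<Rightarrow> 'e \<Rightarrow> bool" where
  "line_adj E ends e f \<longleftrightarrow> e \<in> E \<and> f \<in> E \<and> e \<noteq> f \<and> ends e \<inter> ends f \<noteq> {}"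

definition connected_in :: "('a \<Rightarrow> 'a \<Rightarrow> bool) \<Rightarrow> 'a set \<Rightarrow> bool" where
  "connected_in adj B \<longleftrightarrow>
     (\<forall>x\<in>B. \<forall>y\<in>B. (\<lambda>a b. a \<in> B \<and> b \<in> B \<and> adj a b)\<^sup>*\<^sup>* x y)"

definition has_K_minor :: "'a set \<Rightarrow> ('a \<Rightarrow> 'a \<Rightarrow> bool) \<Rightarrow> nat \<Rightarrow> bool" where
  "has_K_minor V adj t \<longleftrightarrow>
     (\<exists>B :: nat \<Rightarrow> 'a set.
        (\<forall>i<t. B i \<noteq> {} \<and> B i \<subseteq> V \<and> connected_in adj (B i)) \<and>
        (\<forall>i<t. \<forall>j<t. i \<noteq> j \<longrightarrow> B i \<inter> B j = {}) \<and>
        (\<forall>i<t. \<forall>j<t. i \<noteq> j \<longrightarrow> (\<exists>x\<in>B i. \<exists>y\<in>B j. adj x y)))"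

end

theory Submission
  imports Defs
begin

text \<open>Split each branch set of a \<open>K\<^sub>t\<close>-minor of \<open>L(H)\<close> into its \<open>m\<close> copies in \<open>L(mH)\<close>.
  Each copy \<open>B \<times> {k}\<close> is connected, because copy \<open>k\<close> of \<open>L(H)\<close> is an induced subgraph of
  \<open>L(mH)\<close>; two copies of the same branch set are joined because parallel copies of one edge
  share its endpoints; copies of different branch sets are joined through any edge of
  \<open>L(H)\<close> between the original branch sets.\<close>

lemma line_adj_mult_copies:
  "line_adj E ends a b \<Longrightarrow> i < m \<Longrightarrow> j < m \<Longrightarrow>
     line_adj (mult_edges m E) (mult_ends ends) (a, i) (b, j)"
  by (auto simp: line_adj_def mult_edges_def mult_ends_def)

lemma line_adj_mult_parallel:
  "a \<in> E \<Longrightarrow> ends a \<noteq> {} \<Longrightarrow> i < m \<Longrightarrow> j < m \<Longrightarrow> i \<noteq> j \<Longrightarrow>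
     line_adj (mult_edges m E) (mult_ends ends) (a, i) (a, j)"
  by (simp add: line_adj_def mult_edges_def mult_ends_def)

lemma connected_in_mult_copy:
  assumes "connected_in (line_adj E ends) B" and "k < m"
  shows "connected_in (line_adj (mult_edges m E) (mult_ends ends)) (B \<times> {k})"
  unfolding connected_in_def
proof (clarify)
  fix a b assume "a \<in> B" "b \<in> B"
  then have "(\<lambda>x y. x \<in> B \<and> y \<in> B \<and> line_adj E ends x y)\<^sup>*\<^sup>* a b"
    using assms(1) by (simp add: connected_in_def)
  then show "(\<lambda>x y. x \<in> B \<times> {k} \<and> y \<in> B \<times> {k} \<and>
              line_adj (mult_edges m E) (mult_ends ends) x y)\<^sup>*\<^sup>* (a, k) (b, k)"
  proof (induction rule: rtranclp_induct)
    case (step y z)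
    then show ?case
      using line_adj_mult_copies[of E ends y z k m k] assms(2)
      by (auto intro: rtranclp.rtrancl_into_rtrancl)
  qed simp
qed

definition mult_branch_sets :: "nat \<Rightarrow> (nat \<Rightarrow> 'e set) \<Rightarrow> nat \<Rightarrow> ('e \<times> nat) set" where
  "mult_branch_sets m B n = B (n div m) \<times> {n mod m}"

lemma div_mod_less_of_less_mult:
  fixes n m t :: nat
  assumes "n < m * t"
  shows "n div m < t" and "n mod m < m"
proof -
  have "0 < m" using assms by (cases m) auto
  then show "n div m < t" "n mod m < m"
    using assms by (simp_all add: div_less_iff_less_mult mult.commute)
qed

lemma has_K_minor_line_graph_mult:
  assumes ends_ne: "\<forall>e\<in>E. ends e \<noteq> {}"
    and minor: "has_K_minor E (line_adj E ends) t"
    and "0 < m"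
  shows "has_K_minor (mult_edges m E) (line_adj (mult_edges m E) (mult_ends ends)) (m * t)"
proof -
  obtain B where B_branch: "\<forall>i<t. B i \<noteq> {} \<and> B i \<subseteq> E \<and> connected_in (line_adj E ends) (B i)"
    and B_disjoint: "\<forall>i<t. \<forall>j<t. i \<noteq> j \<longrightarrow> B i \<inter> B j = {}"
    and B_joined: "\<forall>i<t. \<forall>j<t. i \<noteq> j \<longrightarrow> (\<exists>x\<in>B i. \<exists>y\<in>B j. line_adj E ends x y)"
    using minor unfolding has_K_minor_def by blast
  let ?C = "mult_branch_sets m B"
  let ?adj = "line_adj (mult_edges m E) (mult_ends ends)"
  show ?thesis
    unfolding has_K_minor_def
  proof (intro exI[of _ ?C] conjI allI impI)
    fix i assume "i < m * t"
    note i = div_mod_less_of_less_mult[OF this]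
    show "?C i \<noteq> {}" "?C i \<subseteq> mult_edges m E"
      using B_branch i by (auto simp: mult_branch_sets_def mult_edges_def)
    show "connected_in ?adj (?C i)"
      using B_branch i by (simp add: mult_branch_sets_def connected_in_mult_copy)
  next
    fix i j assume "i < m * t" "j < m * t" "i \<noteq> j"
    note i = div_mod_less_of_less_mult[OF \<open>i < m * t\<close>]
      and j = div_mod_less_of_less_mult[OF \<open>j < m * t\<close>]
    have index_ne: "i div m \<noteq> j div m \<or> i mod m \<noteq> j mod m"
      using \<open>i \<noteq> j\<close> by (metis div_mult_mod_eq)
    show "?C i \<inter> ?C j = {}"
      using index_ne B_disjoint i j by (auto simp: mult_branch_sets_def)
    show "\<exists>x\<in>?C i. \<exists>y\<in>?C j. ?adj x y"
    proof (cases "i div m = j div m")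
      case True
      obtain a where "a \<in> B (i div m)" using B_branch i by blast
      with B_branch i have "a \<in> E" by blast
      with True index_ne ends_ne i j have "?adj (a, i mod m) (a, j mod m)"
        by (simp add: line_adj_mult_parallel)
      with True \<open>a \<in> B (i div m)\<close> show ?thesis by (auto simp: mult_branch_sets_def)
    next
      case False
      then obtain a b where "a \<in> B (i div m)" "b \<in> B (j div m)" "line_adj E ends a b"
        using B_joined i j by blast
      moreover from this have "?adj (a, i mod m) (b, j mod m)"
        using i j by (simp add: line_adj_mult_copies)
      ultimately show ?thesis by (auto simp: mult_branch_sets_def)
    qed
  qed
qed

theorem mainTheorem12:
  fixes V :: "'v set" and E :: "'e set" and ends :: "'e \<Rightarrow> 'v set" and t m :: nat
  assumes "multigraph V E ends"
    and "has_K_minor E (line_adj E ends) t"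
    and "m \<ge> 2"
  shows "has_K_minor (mult_edges m E) (line_adj (mult_edges m E) (mult_ends ends)) (m * t)"
proof (rule has_K_minor_line_graph_mult)
  show "\<forall>e\<in>E. ends e \<noteq> {}"
    using assms(1) unfolding multigraph_def by fastforce
  show "0 < m" using assms(3) by simp
qed (fact assms(2))

end
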